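(* Let $\mathcal{X}$ be an instance space and $\mathcal{Y}$ a finite label set. Let $\hat f:\mathcal{X}\to\mathbb{P}(\mathcal{Y})$ be a fixed probabilistic classifier (independent of the data below), writing $\hat f(x)_y$ for the probability of label $y$ at $x$. Let $(x_j,y_j)$, $j\in\mathcal{I}_2$, be calibration points, each observed only through a candidate set $S_j\subseteq\mathcal{Y}$ with $y_j\in S_j$, and let $(x_{new},y_{new})$ be a test point. Define the multiset $$\mathcal{E}_{\mathrm{mean}}:=\Big\{\,1-\frac{\sum_{y\in S_j}\hat f(x_j)_y}{|S_j|}: j\in\mathcal{I}_2\Big\}.$$ If the points $\{(x_j,y_j):j\in\mathcal{I}_2\}\cup\{(x_{new},y_{new})\}$ are exchangeable and $\hat f(x_j)_{y_j}\ge 1/|S_j|$ for all $j\in\mathcal{I}_2$ (with probability one), then for every $\epsilon\in(0,1]$, $$\mathbb{P}\big(y_{new}\in\mathcal{T}(x_{new},\hat f,\mathcal{E}_{\mathrm{mean}},\epsilon)\big)\ge 1-\epsilon .$$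
   Context: For a finite multiset $\mathcal{E}$ of real numbers and $\epsilon\in(0,1]$, the critical score $q(\mathcal{E},\epsilon)$ is the $\lceil(1+|\mathcal{E}|)(1-\epsilon)\rceil$-th smallest element of $\mathcal{E}$ (counted with multiplicity); if this index exceeds $|\mathcal{E}|$, $q(\mathcal{E},\epsilon)$ is taken to be $+\infty$. For $x\in\mathcal{X}$, the prediction set is $\mathcal{T}(x,\hat f,\mathcal{E},\epsilon):=\{y\in\mathcal{Y}:\hat f(x)_y\ge 1-q(\mathcal{E},\epsilon)\}$. "Valid" means the coverage bound $\mathbb{P}(y_{new}\in\mathcal{T})\ge 1-\epsilon$. *)

theory Defs
  imports "HOL-Probability.Probability" "HOL-Combinatorics.Permutations" "HOL-Library.Multiset"
begin

definition critical_score :: "real multiset \<Rightarrow> real \<Rightarrow> ereal" where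
  "critical_score E eps =
     (let k = nat \<lceil>(1 + real (size E)) * (1 - eps)\<rceil>
      in if k > size E then \<infinity> else ereal (sorted_list_of_multiset E ! (k - 1)))"

definition pred_set :: "'x \<Rightarrow> ('x \<Rightarrow> 'y \<Rightarrow> real) \<Rightarrow> real multiset \<Rightarrow> real \<Rightarrow> 'y set" where
  "pred_set x f E eps = {y. ereal (f x y) \<ge> 1 - critical_score E eps}"

definition exchangeable :: "'w measure \<Rightarrow> 'b measure \<Rightarrow> nat set \<Rightarrow> (nat \<Rightarrow> 'w \<Rightarrow> 'b) \<Rightarrow> bool" where
  "exchangeable M N I Z \<longleftrightarrow>
     (\<forall>\<pi>. \<pi> permutes I \<longrightarrow>
        distr M (PiM I (\<lambda>_. N)) (\<lambda>\<omega>. \<lambda>i\<in>I. Z (\<pi> i) \<omega>) =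
        distr M (PiM I (\<lambda>_. N)) (\<lambda>\<omega>. \<lambda>i\<in>I. Z i \<omega>))"

definition E_mean :: "nat \<Rightarrow> ('x \<Rightarrow> 'y \<Rightarrow> real) \<Rightarrow> (nat \<Rightarrow> 'x) \<Rightarrow> (nat \<Rightarrow> 'y set) \<Rightarrow> real multiset" where
  "E_mean n f x S = image_mset (\<lambda>j. 1 - (\<Sum>y\<in>S j. f (x j) y) / real (card (S j))) (mset_set {..<n})"

end

theory Submission
  imports Defs
begin

text \<open>Let \<open>r\<^sub>i = 1 - f(x\<^sub>i)(y\<^sub>i)\<close> be the score of the true label of point \<open>i \<le> n\<close>.
  The mean of a probability vector over \<open>S\<^sub>j\<close> is at most \<open>1/|S\<^sub>j|\<close>, so the hypothesis
  \<open>f(x\<^sub>j)(y\<^sub>j) \<ge> 1/|S\<^sub>j|\<close> makes each entry of \<open>E_mean\<close> dominate \<open>r\<^sub>j\<close>. Hence \<open>y\<^sub>n\<close> is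
  covered as soon as fewer than \<open>k = \<lceil>(n+1)(1-\<epsilon>)\<rceil>\<close> of the true scores lie strictly below
  \<open>r\<^sub>n\<close>. By exchangeability, the event that at least \<open>k\<close> true scores lie below \<open>r\<^sub>i\<close> has
  the same probability for every \<open>i\<close>, while at most \<open>n+1-k\<close> indices can have this property
  at once; so its probability is at most \<open>(n+1-k)/(n+1) \<le> \<epsilon>\<close>.\<close>

lemma sorted_nth_less_iff:
  fixes xs :: "'a::linorder list"
  assumes "sorted xs" "i < length xs"
  shows "xs ! i < u \<longleftrightarrow> i < length (filter (\<lambda>x. x < u) xs)"
  using assms
proof (induction xs arbitrary: i)
  case (Cons a xs)
  show ?case
  proof (cases "a < u")
    case True
    with Cons show ?thesis by (cases i) auto
  next
    case False
    with Cons.prems have "\<forall>x\<in>set (a # xs). \<not> x < u" by auto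
    with nth_mem[OF Cons.prems(2)] show ?thesis by (auto simp: filter_empty_conv)
  qed
qed simp

lemma le_critical_score_iff:
  fixes E :: "real multiset" and eps u :: real
  defines "k \<equiv> nat \<lceil>(1 + real (size E)) * (1 - eps)\<rceil>"
  assumes "1 \<le> k"
  shows "ereal u \<le> critical_score E eps \<longleftrightarrow> size {#x \<in># E. x < u#} < k"
proof (cases "size E < k")
  case True
  then have "critical_score E eps = \<infinity>"
    by (simp add: critical_score_def Let_def k_def[symmetric])
  moreover have "size {#x \<in># E. x < u#} < k"
    using size_filter_mset_lesseq[of _ E] True by (rule le_less_trans)
  ultimately show ?thesis by simp
next
  case False
  let ?xs = "sorted_list_of_multiset E"
  have len: "length ?xs = size E"
    by (metis mset_sorted_list_of_multiset size_mset)
  have "size {#x \<in># E. x < u#} = length (filter (\<lambda>x. x < u) ?xs)"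
    by (metis mset_filter mset_sorted_list_of_multiset size_mset)
  moreover have "?xs ! (k - 1) < u \<longleftrightarrow> k - 1 < length (filter (\<lambda>x. x < u) ?xs)"
    using False assms(2) len by (intro sorted_nth_less_iff) auto
  ultimately show ?thesis
    using False assms(2)
    by (auto simp: critical_score_def Let_def k_def[symmetric] not_less)
qed

lemma mem_pred_set_iff:
  "y \<in> pred_set x f E eps \<longleftrightarrow> ereal (1 - f x y) \<le> critical_score E eps"
  by (cases "critical_score E eps") (auto simp: pred_set_def one_ereal_def)

lemma card_many_smaller_le:
  fixes v :: "'i \<Rightarrow> 'a::linorder"
  assumes "finite I"
  shows "card {i\<in>I. k \<le> card {j\<in>I. v j < v i}} \<le> card I - k"
proof (cases "{i\<in>I. k \<le> card {j\<in>I. v j < v i}} = {}")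
  case True
  then show ?thesis by (simp only: card.empty zero_le)
next
  case False
  let ?B = "{i\<in>I. k \<le> card {j\<in>I. v j < v i}}"
  have fin: "finite ?B" using assms by simp
  define i0 where "i0 = arg_min_on v ?B"
  have i0: "i0 \<in> ?B" "\<And>i. i \<in> ?B \<Longrightarrow> v i0 \<le> v i"
    unfolding i0_def using arg_min_if_finite(1)[OF fin False] arg_min_least[OF fin False] by auto
  let ?L = "{j\<in>I. v j < v i0}"
  have "card ?B + k \<le> card ?B + card ?L" using i0 by simp
  also have "\<dots> = card (?B \<union> ?L)"
  proof (rule card_Un_disjoint[symmetric])
    show "?B \<inter> ?L = {}" using i0(2) by (auto simp: not_less[symmetric])
  qed (use assms in auto)
  also have "\<dots> \<le> card I" using assms by (intro card_mono) auto
  finally show ?thesis by simp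
qed

lemma card_Collect_permutes:
  assumes "p permutes I"
  shows "card {j\<in>I. P (p j)} = card {j\<in>I. P j}"
proof -
  have "{j\<in>I. P (p j)} = p -` {j\<in>I. P j}"
    using permutes_in_image[OF assms] by auto
  also have "card \<dots> = card {j\<in>I. P j}"
    using permutes_inj[OF assms] permutes_surj[OF assms] by (intro card_vimage_inj) auto
  finally show ?thesis .
qed

lemma measurable_card_Collect:
  fixes I :: "nat set"
  assumes "\<And>j. j \<in> I \<Longrightarrow> Measurable.pred M (P j)"
  shows "(\<lambda>\<omega>. card {j\<in>I. P j \<omega>}) \<in> M \<rightarrow>\<^sub>M count_space UNIV"
proof (rule measurable_card)
  fix j show "{\<omega>\<in>space M. j \<in> {j\<in>I. P j \<omega>}} \<in> sets M"
    using assms[of j] by (cases "j \<in> I") auto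
qed

lemma mean_le_inverse_card:
  fixes p :: "'y::finite \<Rightarrow> real"
  assumes "\<And>y. 0 \<le> p y" "sum p UNIV = 1"
  shows "sum p s / card s \<le> 1 / card s"
proof -
  have "sum p s \<le> sum p UNIV" by (rule sum_mono2) (auto simp: assms(1))
  then show ?thesis using assms(2) by (simp add: divide_right_mono)
qed

lemma exchangeable_measure_eq:
  assumes "exchangeable M N I Z" "p permutes I" "\<And>i. i \<in> I \<Longrightarrow> Z i \<in> M \<rightarrow>\<^sub>M N"
    and P: "Measurable.pred (PiM I (\<lambda>_. N)) P"
  shows "measure M {\<omega>\<in>space M. P (\<lambda>j\<in>I. Z (p j) \<omega>)} = measure M {\<omega>\<in>space M. P (\<lambda>j\<in>I. Z j \<omega>)}"
proof -
  let ?C = "{z\<in>space (PiM I (\<lambda>_. N)). P z}"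
  have C: "?C \<in> sets (PiM I (\<lambda>_. N))" using P by measurable
  have vec: "(\<lambda>\<omega>. \<lambda>j\<in>I. Z (q j) \<omega>) \<in> M \<rightarrow>\<^sub>M PiM I (\<lambda>_. N)" if "q permutes I" for q
    using assms(3) permutes_in_image[OF that] by (intro measurable_restrict) auto
  have pre: "(\<lambda>\<omega>. \<lambda>j\<in>I. Z (q j) \<omega>) -` ?C \<inter> space M = {\<omega>\<in>space M. P (\<lambda>j\<in>I. Z (q j) \<omega>)}"
    if "q permutes I" for q
    using measurable_space[OF vec[OF that]] by auto
  have "distr M (PiM I (\<lambda>_. N)) (\<lambda>\<omega>. \<lambda>j\<in>I. Z (p j) \<omega>) = distr M (PiM I (\<lambda>_. N)) (\<lambda>\<omega>. \<lambda>j\<in>I. Z (id j) \<omega>)"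
    using assms(1,2) by (simp add: exchangeable_def)
  then have "measure (distr M (PiM I (\<lambda>_. N)) (\<lambda>\<omega>. \<lambda>j\<in>I. Z (p j) \<omega>)) ?C
    = measure (distr M (PiM I (\<lambda>_. N)) (\<lambda>\<omega>. \<lambda>j\<in>I. Z (id j) \<omega>)) ?C"
    by simp
  then show ?thesis
    using assms(2) permutes_id[of I]
    by (simp only: measure_distr[OF vec C] pre) simp
qed

lemma exchangeable_rank_measure_eq:
  fixes g :: "'b \<Rightarrow> 'c::{linorder_topology, second_countable_topology}"
  assumes "exchangeable M N I Z" "i \<in> I" "n \<in> I" "\<And>i. i \<in> I \<Longrightarrow> Z i \<in> M \<rightarrow>\<^sub>M N"
    and g: "g \<in> borel_measurable N"
  shows "measure M {\<omega>\<in>space M. k \<le> card {j\<in>I. g (Z j \<omega>) < g (Z i \<omega>)}}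
       = measure M {\<omega>\<in>space M. k \<le> card {j\<in>I. g (Z j \<omega>) < g (Z n \<omega>)}}"
proof -
  let ?p = "Transposition.transpose i n"
  have p: "?p permutes I" using assms(2,3) by (rule permutes_swap_id)
  have [measurable]: "(\<lambda>z. card {j\<in>I. g (z j) < g (z n)}) \<in> PiM I (\<lambda>_. N) \<rightarrow>\<^sub>M count_space UNIV"
  proof (rule measurable_card_Collect)
    have "(\<lambda>z. g (z j)) \<in> borel_measurable (PiM I (\<lambda>_. N))" if "j \<in> I" for j
      using that g by (auto intro: measurable_compose[OF measurable_component_singleton])
    then show "Measurable.pred (PiM I (\<lambda>_. N)) (\<lambda>z. g (z j) < g (z n))" if "j \<in> I" for j
      using that assms(3) by measurable
  qed
  have "Measurable.pred (PiM I (\<lambda>_. N)) (\<lambda>z. k \<le> card {j\<in>I. g (z j) < g (z n)})"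
    by measurable
  from exchangeable_measure_eq[OF assms(1) p assms(4) this] show ?thesis
    using assms(2,3) card_Collect_permutes[OF p, of "\<lambda>j. g (Z j _) < g (Z i _)"]
    by (simp cong: conj_cong)
qed

lemma sets_rank_event:
  fixes I :: "nat set" and g :: "'b \<Rightarrow> 'c::{linorder_topology, second_countable_topology}"
  assumes "\<And>i. i \<in> I \<Longrightarrow> Z i \<in> M \<rightarrow>\<^sub>M N" "g \<in> borel_measurable N" "i \<in> I"
  shows "{\<omega>\<in>space M. k \<le> card {j\<in>I. g (Z j \<omega>) < g (Z i \<omega>)}} \<in> sets M"
proof -
  have [measurable]: "(\<lambda>\<omega>. g (Z j \<omega>)) \<in> borel_measurable M" if "j \<in> I" for j
    using measurable_compose[OF assms(1)[OF that] assms(2)] .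
  have [measurable]: "(\<lambda>\<omega>. card {j\<in>I. g (Z j \<omega>) < g (Z i \<omega>)}) \<in> M \<rightarrow>\<^sub>M count_space UNIV"
    using assms(3) by (intro measurable_card_Collect) measurable
  show ?thesis by measurable
qed

lemma (in prob_space) exchangeable_rank_bound:
  fixes g :: "'b \<Rightarrow> 'c::{linorder_topology, second_countable_topology}"
  assumes "exchangeable M N I Z" "finite I" "n \<in> I" "\<And>i. i \<in> I \<Longrightarrow> Z i \<in> M \<rightarrow>\<^sub>M N"
    and g: "g \<in> borel_measurable N"
  shows "card I * prob {\<omega>\<in>space M. k \<le> card {j\<in>I. g (Z j \<omega>) < g (Z n \<omega>)}} \<le> card I - k"
proof -
  define B where "B i = {\<omega>\<in>space M. k \<le> card {j\<in>I. g (Z j \<omega>) < g (Z i \<omega>)}}" for i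
  have B_sets: "B i \<in> events" if "i \<in> I" for i
    unfolding B_def using assms(4) g that by (rule sets_rank_event)
  have B_integrable: "integrable M (indicator (B i) :: 'a \<Rightarrow> real)" if "i \<in> I" for i
    using B_sets[OF that] by (intro integrable_real_indicator) (auto simp: less_top[symmetric])
  have count: "(\<Sum>i\<in>I. indicator (B i) \<omega>) \<le> real (card I - k)" if "\<omega> \<in> space M" for \<omega>
  proof -
    have "(\<Sum>i\<in>I. indicator (B i) \<omega>) = real (card {i\<in>I. k \<le> card {j\<in>I. g (Z j \<omega>) < g (Z i \<omega>)}})"
      using that assms(2) by (simp add: indicator_def B_def Int_def)
    also have "\<dots> \<le> real (card I - k)"
      using card_many_smaller_le[OF assms(2)] by simp
    finally show ?thesis .
  qed
  have "card I * prob (B n) = (\<Sum>i\<in>I. prob (B i))"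
    using exchangeable_rank_measure_eq[OF assms(1) _ assms(3,4) g] by (simp add: B_def)
  also have "\<dots> = expectation (\<lambda>\<omega>. \<Sum>i\<in>I. indicator (B i) \<omega>)"
    using B_integrable by (simp add: Bochner_Integration.integral_sum B_sets)
  also have "\<dots> \<le> expectation (\<lambda>_. real (card I - k))"
    using B_integrable count by (intro integral_mono) auto
  also have "\<dots> = card I - k" by (simp add: prob_space)
  finally show ?thesis unfolding B_def .
qed

lemma borel_measurable_pair_count_space:
  fixes f :: "'x \<Rightarrow> 'y::countable \<Rightarrow> real"
  assumes "\<And>y. (\<lambda>x. f x y) \<in> borel_measurable MX"
  shows "(\<lambda>p. f (fst p) (snd p)) \<in> borel_measurable (MX \<Otimes>\<^sub>M count_space UNIV)"
  by (rule measurable_compose_countable'[where I=UNIV and g=snd and f="\<lambda>y p. f (fst p) y"])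
     (auto intro: measurable_compose[OF measurable_fst assms])

lemma borel_measurable_mean_random_set:
  fixes S :: "'w \<Rightarrow> 'y::finite set"
  assumes "S \<in> M \<rightarrow>\<^sub>M count_space UNIV" "\<And>y. (\<lambda>\<omega>. h \<omega> y) \<in> borel_measurable M"
  shows "(\<lambda>\<omega>. (\<Sum>y\<in>S \<omega>. h \<omega> y) / card (S \<omega>)) \<in> borel_measurable M"
  by (rule measurable_compose_countable'[where I=UNIV and g=S and f="\<lambda>s \<omega>. (\<Sum>y\<in>s. h \<omega> y) / card s"])
     (use assms in auto)

lemma mem_pred_set_E_mean_iff:
  assumes "k = nat \<lceil>(1 + real n) * (1 - eps)\<rceil>" "1 \<le> k"
  shows "y' \<in> pred_set x' f (E_mean n f x S) eps \<longleftrightarrow>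
    card {j\<in>{..<n}. 1 - (\<Sum>z\<in>S j. f (x j) z) / card (S j) < 1 - f x' y'} < k"
proof -
  have size: "size (E_mean n f x S) = n" by (simp add: E_mean_def)
  have "y' \<in> pred_set x' f (E_mean n f x S) eps \<longleftrightarrow> size {#e \<in># E_mean n f x S. e < 1 - f x' y'#} < k"
    using le_critical_score_iff[of "E_mean n f x S" eps "1 - f x' y'"] assms
    unfolding mem_pred_set_iff size by simp
  also have "size {#e \<in># E_mean n f x S. e < 1 - f x' y'#}
      = card {j\<in>{..<n}. 1 - (\<Sum>z\<in>S j. f (x j) z) / card (S j) < 1 - f x' y'}"
    by (simp add: E_mean_def filter_mset_image_mset)
  finally show ?thesis .
qed

lemma mem_pred_set_E_mean_if_rank_less:
  fixes f :: "'x \<Rightarrow> 'y::finite \<Rightarrow> real"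
  assumes "\<And>x y. 0 \<le> f x y" "\<And>x. (\<Sum>y\<in>UNIV. f x y) = 1"
    and k: "k = nat \<lceil>(1 + real n) * (1 - eps)\<rceil>" "1 \<le> k"
    and lower: "\<forall>j<n. 1 / card (S j) \<le> f (x j) (y j)"
    and rank: "card {j\<in>{..n}. 1 - f (x j) (y j) < 1 - f (x n) (y n)} < k"
  shows "y n \<in> pred_set (x n) f (E_mean n f x S) eps"
proof -
  have "1 - f (x j) (y j) \<le> 1 - (\<Sum>z\<in>S j. f (x j) z) / card (S j)" if "j < n" for j
    using mean_le_inverse_card[of "f (x j)" "S j", OF assms(1,2)] lower that by auto
  then have "{j\<in>{..<n}. 1 - (\<Sum>z\<in>S j. f (x j) z) / card (S j) < 1 - f (x n) (y n)}
      \<subseteq> {j\<in>{..n}. 1 - f (x j) (y j) < 1 - f (x n) (y n)}"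
    by (auto intro: less_le_trans)
  then have "card {j\<in>{..<n}. 1 - (\<Sum>z\<in>S j. f (x j) z) / card (S j) < 1 - f (x n) (y n)}
      \<le> card {j\<in>{..n}. 1 - f (x j) (y j) < 1 - f (x n) (y n)}"
    by (intro card_mono) auto
  with rank show ?thesis
    unfolding mem_pred_set_E_mean_iff[OF k] by linarith
qed

lemma conformal_rank_index:
  fixes eps :: real
  assumes "0 < eps" "eps < 1" "k = nat \<lceil>(1 + real n) * (1 - eps)\<rceil>"
  shows "1 \<le> k" "real (Suc n - k) \<le> Suc n * eps"
proof -
  have "(1 + real n) * (1 - eps) \<le> k" "0 < (1 + real n) * (1 - eps)"
    using assms by auto
  then show "1 \<le> k" "real (Suc n - k) \<le> Suc n * eps"
    using assms(1) by (auto simp: of_nat_diff_if algebra_simps)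
qed

lemma sets_pred_set_E_mean:
  fixes f :: "'x \<Rightarrow> 'y::finite \<Rightarrow> real"
  assumes k: "k = nat \<lceil>(1 + real n) * (1 - eps)\<rceil>" "1 \<le> k"
    and f_meas: "\<And>y. (\<lambda>x. f x y) \<in> borel_measurable MX"
    and XY_meas: "\<And>i. i \<le> n \<Longrightarrow> (\<lambda>\<omega>. (X i \<omega>, Y i \<omega>)) \<in> M \<rightarrow>\<^sub>M MX \<Otimes>\<^sub>M count_space UNIV"
    and S_meas: "\<And>j. j < n \<Longrightarrow> S j \<in> M \<rightarrow>\<^sub>M count_space UNIV"
  shows "{\<omega>\<in>space M. Y n \<omega> \<in> pred_set (X n \<omega>) f (E_mean n f (\<lambda>j. X j \<omega>) (\<lambda>j. S j \<omega>)) eps} \<in> sets M"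
proof -
  have [measurable]: "(\<lambda>\<omega>. f (X n \<omega>) (Y n \<omega>)) \<in> borel_measurable M"
    using measurable_compose[OF XY_meas borel_measurable_pair_count_space[OF f_meas]] by simp
  have [measurable]: "(\<lambda>\<omega>. (\<Sum>z\<in>S j \<omega>. f (X j \<omega>) z) / card (S j \<omega>)) \<in> borel_measurable M"
    if "j < n" for j
  proof (rule borel_measurable_mean_random_set[OF S_meas[OF that]])
    have "X j \<in> M \<rightarrow>\<^sub>M MX"
      using measurable_compose[OF XY_meas measurable_fst] that by simp
    then show "(\<lambda>\<omega>. f (X j \<omega>) y) \<in> borel_measurable M" for y
      using f_meas by measurable
  qed
  have [measurable]: "(\<lambda>\<omega>. card {j\<in>{..<n}. 1 - (\<Sum>z\<in>S j \<omega>. f (X j \<omega>) z) / card (S j \<omega>)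
      < 1 - f (X n \<omega>) (Y n \<omega>)}) \<in> M \<rightarrow>\<^sub>M count_space UNIV"
    by (rule measurable_card_Collect) measurable
  show ?thesis
    unfolding mem_pred_set_E_mean_iff[OF k] by measurable
qed

theorem theorem3:
  fixes M :: "'w measure" and MX :: "'x measure"
    and f :: "'x \<Rightarrow> 'y::finite \<Rightarrow> real"
    and X :: "nat \<Rightarrow> 'w \<Rightarrow> 'x" and Y :: "nat \<Rightarrow> 'w \<Rightarrow> 'y"
    and S :: "nat \<Rightarrow> 'w \<Rightarrow> 'y set"
    and n :: nat and \<epsilon> :: real
  assumes "prob_space M"
    and f_nonneg: "\<And>x y. f x y \<ge> 0"
    and f_sum: "\<And>x. (\<Sum>y\<in>UNIV. f x y) = 1"
    and f_meas: "\<And>y. (\<lambda>x. f x y) \<in> borel_measurable MX"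
    and XY_meas: "\<And>i. i \<le> n \<Longrightarrow> (\<lambda>\<omega>. (X i \<omega>, Y i \<omega>)) \<in> M \<rightarrow>\<^sub>M MX \<Otimes>\<^sub>M count_space UNIV"
    and S_meas: "\<And>j. j < n \<Longrightarrow> S j \<in> M \<rightarrow>\<^sub>M count_space UNIV"
    and exch: "exchangeable M (MX \<Otimes>\<^sub>M count_space UNIV) {..n} (\<lambda>i \<omega>. (X i \<omega>, Y i \<omega>))"
    and cand: "AE \<omega> in M. \<forall>j<n. Y j \<omega> \<in> S j \<omega>"
    and lower: "AE \<omega> in M. \<forall>j<n. f (X j \<omega>) (Y j \<omega>) \<ge> 1 / real (card (S j \<omega>))"
    and eps: "0 < \<epsilon>" "\<epsilon> \<le> 1"
  shows "measure M {\<omega> \<in> space M.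
           Y n \<omega> \<in> pred_set (X n \<omega>) f (E_mean n f (\<lambda>j. X j \<omega>) (\<lambda>j. S j \<omega>)) \<epsilon>}
         \<ge> 1 - \<epsilon>"
proof (cases "\<epsilon> = 1")
  case False
  interpret prob_space M by fact
  define k where "k = nat \<lceil>(1 + real n) * (1 - \<epsilon>)\<rceil>"
  have k: "1 \<le> k" "real (Suc n - k) \<le> Suc n * \<epsilon>"
    using conformal_rank_index[OF eps(1) _ k_def] eps(2) False by auto
  define score where "score p = 1 - f (fst p) (snd p)" for p :: "'x \<times> 'y"
  have score_meas: "score \<in> borel_measurable (MX \<Otimes>\<^sub>M count_space UNIV)"
    unfolding score_def[abs_def] using f_meas
    by (intro borel_measurable_diff borel_measurable_pair_count_space) auto
  let ?B = "{\<omega>\<in>space M. k \<le> card {j\<in>{..n}. score (X j \<omega>, Y j \<omega>) < score (X n \<omega>, Y n \<omega>)}}"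
  let ?T = "{\<omega>\<in>space M. Y n \<omega> \<in> pred_set (X n \<omega>) f (E_mean n f (\<lambda>j. X j \<omega>) (\<lambda>j. S j \<omega>)) \<epsilon>}"
  have B_events: "?B \<in> events"
    using XY_meas by (intro sets_rank_event[OF _ score_meas]) auto
  have "card {..n} * prob ?B \<le> card {..n} - k"
    using exch XY_meas by (intro exchangeable_rank_bound[OF _ _ _ _ score_meas]) auto
  with k(2) have "Suc n * prob ?B \<le> Suc n * \<epsilon>"
    unfolding card_atMost by linarith
  then have B: "prob ?B \<le> \<epsilon>"
    by (rule mult_left_le_imp_le) simp
  have "AE \<omega> in M. \<omega> \<in> space M - ?B \<longrightarrow> \<omega> \<in> ?T"
    using lower
  proof eventually_elim
    case (elim \<omega>)
    show ?case
      using mem_pred_set_E_mean_if_rank_less[where f=f, OF f_nonneg f_sum k_def k(1) elim]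
      by (auto simp: score_def not_le)
  qed
  moreover have "?T \<in> events"
    by (rule sets_pred_set_E_mean[OF k_def k(1) f_meas XY_meas S_meas])
  ultimately have "prob (space M - ?B) \<le> prob ?T"
    by (rule finite_measure_mono_AE)
  then show ?thesis
    using B B_events prob_compl[of ?B] by linarith
qed simp

end
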